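(* Let $R$ be an associative ring with identity and $a,b,c,d\in R$ such that both $a^{\|(b,c)}$ and $d^{\|(b,c)}$ exist. Then the following are equivalent: (i) $ad$ has a $(b,c)$-inverse and $(ad)^{\|(b,c)}=d^{\|(b,c)}a^{\|(b,c)}$; (ii) $d^{\|(b,c)}=d^{\|(b,c)}add^{\|(b,c)}a^{\|(b,c)}=d^{\|(b,c)}a^{\|(b,c)}add^{\|(b,c)}$; (iii) $a^{\|(b,c)}=a^{\|(b,c)}add^{\|(b,c)}a^{\|(b,c)}=d^{\|(b,c)}a^{\|(b,c)}ada^{\|(b,c)}$.
   Context: For $a,b,c\in R$, $a$ is $(b,c)$-invertible if there exists $y\in R$ with $y\in (bRy)\cap(yRc)$, $yab=b$ and $cay=c$; such $y$ is unique and denoted $a^{\|(b,c)}$. *)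

theory Defs
  imports Main
begin

definition is_bc_inverse :: "'a::ring_1 \<Rightarrow> 'a \<Rightarrow> 'a \<Rightarrow> 'a \<Rightarrow> bool" where
  "is_bc_inverse a b c y \<longleftrightarrow>
     (\<exists>r. y = b * r * y) \<and> (\<exists>s. y = y * s * c) \<and> y * a * b = b \<and> c * a * y = c"

definition bc_invertible :: "'a::ring_1 \<Rightarrow> 'a \<Rightarrow> 'a \<Rightarrow> bool" where
  "bc_invertible a b c \<longleftrightarrow> (\<exists>y. is_bc_inverse a b c y)"

definition bc_inv :: "'a::ring_1 \<Rightarrow> 'a \<Rightarrow> 'a \<Rightarrow> 'a" where
  "bc_inv a b c = (THE y. is_bc_inverse a b c y)"

end

theory Submission
  imports Defs
begin

text \<open>
  With \<open>x\<close> the \<open>(b,c)\<close>-inverse of \<open>a\<close> and \<open>y\<close> that of \<open>d\<close>, the product \<open>z = y x\<close> lies in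
  \<open>bR \<inter> Rc\<close>, and such a \<open>z\<close> is the \<open>(b,c)\<close>-inverse of \<open>ad\<close> as soon as \<open>z (ad) b = b\<close> and
  \<open>c (ad) z = c\<close>. For every \<open>(b,c)\<close>-inverse \<open>w\<close> of any element, these two equations are
  equivalent to \<open>w = w (ad) z = z (ad) w\<close>; taking \<open>w = y\<close> gives (ii) and \<open>w = x\<close> gives (iii).
\<close>

lemma is_bc_inverse_unique:
  fixes a b c :: "'a::ring_1"
  assumes "is_bc_inverse a b c y" and "is_bc_inverse a b c y'"
  shows "y = y'"
proof -
  obtain r where r: "y = b * r * y" using assms(1) unfolding is_bc_inverse_def by blast
  obtain s where s: "y' = y' * s * c" using assms(2) unfolding is_bc_inverse_def by blast
  have y'ab: "y' * a * b = b" and cay: "c * a * y = c"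
    using assms unfolding is_bc_inverse_def by auto
  have "y = y' * a * b * r * y" using r y'ab by (simp add: mult.assoc)
  also have "\<dots> = y' * a * y" using r by (simp add: mult.assoc)
  also have "\<dots> = y' * s * c * a * y" using s by simp
  also have "\<dots> = y' * s * (c * a * y)" by (simp add: mult.assoc)
  also have "\<dots> = y'" using cay s by simp
  finally show ?thesis .
qed

lemma is_bc_inverse_bc_inv:
  assumes "bc_invertible a b c"
  shows "is_bc_inverse a b c (bc_inv a b c)"
  using assms is_bc_inverse_unique unfolding bc_invertible_def bc_inv_def by (metis theI)

lemma bc_inv_eq_iff:
  "bc_invertible a b c \<and> bc_inv a b c = z \<longleftrightarrow> is_bc_inverse a b c z"
  using is_bc_inverse_bc_inv is_bc_inverse_unique unfolding bc_invertible_def by blast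

lemma is_bc_inverse_iff_equations:
  fixes e b c z :: "'a::ring_1"
  assumes u: "z = b * u" and v: "z = v * c"
  shows "is_bc_inverse e b c z \<longleftrightarrow> z * e * b = b \<and> c * e * z = c"
proof
  assume eqs: "z * e * b = b \<and> c * e * z = c"
  have "z * e * z = z * e * b * u" using u by (simp add: mult.assoc)
  also have "\<dots> = z" using eqs u by simp
  finally have zez: "z * e * z = z" .
  have "z = b * (u * e) * z" using zez u by (simp add: mult.assoc)
  moreover have "z = z * (e * v) * c" using zez v by (simp add: mult.assoc)
  ultimately show "is_bc_inverse e b c z"
    using eqs unfolding is_bc_inverse_def by blast
qed (simp add: is_bc_inverse_def)

lemma bc_equations_iff_absorbs:
  fixes d e b c w z :: "'a::ring_1"
  assumes "is_bc_inverse d b c w"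
  shows "z * e * b = b \<and> c * e * z = c \<longleftrightarrow> w = w * e * z \<and> w = z * e * w"
proof -
  obtain r where r: "w = b * r * w" using assms unfolding is_bc_inverse_def by blast
  obtain s where s: "w = w * s * c" using assms unfolding is_bc_inverse_def by blast
  have wdb: "w * d * b = b" and cdw: "c * d * w = c"
    using assms unfolding is_bc_inverse_def by auto
  show ?thesis
  proof
    assume eqs: "z * e * b = b \<and> c * e * z = c"
    have "w * e * z = w * s * (c * e * z)" using s by (metis mult.assoc)
    also have "\<dots> = w" using eqs s by simp
    finally have "w = w * e * z" ..
    moreover have "z * e * w = z * e * b * r * w" using r by (metis mult.assoc)
    then have "z * e * w = w" using eqs r by simp
    ultimately show "w = w * e * z \<and> w = z * e * w" by simp
  next
    assume absorbs: "w = w * e * z \<and> w = z * e * w"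
    have "z * e * b = z * e * w * d * b" using wdb by (simp add: mult.assoc)
    also have "\<dots> = b" using absorbs wdb by simp
    finally have zeb: "z * e * b = b" .
    have "c * e * z = c * d * w * e * z" using cdw by simp
    also have "\<dots> = c * d * (w * e * z)" by (simp add: mult.assoc)
    also have "\<dots> = c" using absorbs cdw by simp
    finally show "z * e * b = b \<and> c * e * z = c" using zeb by simp
  qed
qed

theorem theorem4p4:
  fixes a b c d :: "'r::ring_1"
  assumes "bc_invertible a b c" and "bc_invertible d b c"
  shows "((bc_invertible (a * d) b c \<and> bc_inv (a * d) b c = bc_inv d b c * bc_inv a b c)
          \<longleftrightarrow> (bc_inv d b c = bc_inv d b c * a * d * bc_inv d b c * bc_inv a b c
               \<and> bc_inv d b c * a * d * bc_inv d b c * bc_inv a b c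
                 = bc_inv d b c * bc_inv a b c * a * d * bc_inv d b c))
       \<and> ((bc_invertible (a * d) b c \<and> bc_inv (a * d) b c = bc_inv d b c * bc_inv a b c)
          \<longleftrightarrow> (bc_inv a b c = bc_inv a b c * a * d * bc_inv d b c * bc_inv a b c
               \<and> bc_inv a b c * a * d * bc_inv d b c * bc_inv a b c
                 = bc_inv d b c * bc_inv a b c * a * d * bc_inv a b c))"
proof -
  define x where "x = bc_inv a b c"
  define y where "y = bc_inv d b c"
  have x: "is_bc_inverse a b c x" and y: "is_bc_inverse d b c y"
    using assms is_bc_inverse_bc_inv x_def y_def by blast+
  obtain r s where r: "y = b * r * y" and s: "x = x * s * c"
    using x y unfolding is_bc_inverse_def by blast
  have "y * x = b * (r * y * x)"
    by (subst r) (simp add: mult.assoc)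
  moreover have "y * x = (y * x * s) * c"
    by (subst s) (simp add: mult.assoc)
  ultimately have equations: "is_bc_inverse (a * d) b c (y * x)
      \<longleftrightarrow> y * x * (a * d) * b = b \<and> c * (a * d) * (y * x) = c"
    by (rule is_bc_inverse_iff_equations)
  have "is_bc_inverse (a * d) b c (y * x) \<longleftrightarrow> y = y * a * d * y * x \<and> y = y * x * a * d * y"
    unfolding equations bc_equations_iff_absorbs [OF y] by (simp add: mult.assoc)
  moreover have "is_bc_inverse (a * d) b c (y * x) \<longleftrightarrow> x = x * a * d * y * x \<and> x = y * x * a * d * x"
    unfolding equations bc_equations_iff_absorbs [OF x] by (simp add: mult.assoc)
  ultimately show ?thesis
    unfolding bc_inv_eq_iff x_def [symmetric] y_def [symmetric] by auto
qed

end
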